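(* Let $A$ be a real symmetric positive semidefinite $n\times n$ matrix, $P$ an orthogonal projection matrix, $T\in\{1,\dots,n\}$, and $u>\lambda_{\max}(A)$. Then $$\sum_{i=n-T+1}^n\frac{1}{u-\lambda_i(PAP)}\le\sum_{i=n-T+1}^n\frac{1}{u-\lambda_i(A)}.$$
   Context: Eigenvalues $\lambda_1\le\dots\le\lambda_n$ of a symmetric matrix are listed in increasing order. *)

theory Defs
  imports "Jordan_Normal_Form.Char_Poly" "HOL-Library.Multiset"
begin

text \<open>Eigenvalues (with multiplicity) of a square real matrix, as the roots of its
characteristic polynomial, listed in increasing order. For a real symmetric
n x n matrix this list has length n.\<close>
definition eigs :: "real mat \<Rightarrow> real list" where
  "eigs A = sorted_list_of_multiset (proots (char_poly A))"

text \<open>lambda_i(A), 1-based: lambda_1 \<le> ... \<le> lambda_n.\<close>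
definition eig :: "real mat \<Rightarrow> nat \<Rightarrow> real" where
  "eig A i = eigs A ! (i - 1)"

definition lambda_max :: "real mat \<Rightarrow> real" where
  "lambda_max A = eig A (dim_row A)"

definition symmetric_mat :: "real mat \<Rightarrow> bool" where
  "symmetric_mat A \<longleftrightarrow> A\<^sup>T = A"

definition psd_mat :: "nat \<Rightarrow> real mat \<Rightarrow> bool" where
  "psd_mat n A \<longleftrightarrow> A \<in> carrier_mat n n \<and> symmetric_mat A \<and>
     (\<forall>x \<in> carrier_vec n. 0 \<le> x \<bullet> (A *\<^sub>v x))"

definition orth_proj_mat :: "nat \<Rightarrow> real mat \<Rightarrow> bool" where
  "orth_proj_mat n P \<longleftrightarrow> P \<in> carrier_mat n n \<and> P * P = P \<and> P\<^sup>T = P"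

end

theory Submission
  imports
    Defs
    "Jordan_Normal_Form.Schur_Decomposition"
    "HOL-Computational_Algebra.Fundamental_Theorem_Algebra"
begin

text \<open>Diagonalise \<open>A = V D V\<^sup>T\<close> and \<open>PAP = U F U\<^sup>T\<close> orthogonally. For every threshold
\<open>t \<ge> 0\<close>, \<open>PAP\<close> has at most as many eigenvalues above \<open>t\<close> as \<open>A\<close>: otherwise counting
equations yields a nonzero \<open>w\<close> in the span of the eigenvectors of \<open>PAP\<close> with eigenvalue
\<open>> t\<close> such that \<open>Pw\<close> is orthogonal to the eigenvectors of \<open>A\<close> with eigenvalue \<open>> t\<close>, and
then \<open>t |w|\<^sup>2 < \<langle>w, PAPw\<rangle> = \<langle>Pw, A Pw\<rangle> \<le> t |Pw|\<^sup>2 \<le> t |w|\<^sup>2\<close>. As \<open>A\<close> is positive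
semidefinite, each of its eigenvalues is such a threshold, so \<open>\<lambda>\<^sub>i(PAP) \<le> \<lambda>\<^sub>i(A)\<close> for
every \<open>i\<close>, and the inequality follows termwise because \<open>x \<mapsto> 1/(u - x)\<close> is increasing
below \<open>u\<close>.\<close>

definition orthonormal_mat :: "nat \<Rightarrow> real mat \<Rightarrow> bool" where
  "orthonormal_mat n V \<longleftrightarrow> V \<in> carrier_mat n n \<and> V\<^sup>T * V = 1\<^sub>m n"

lemma orthonormal_mat_mult_transpose:
  assumes "orthonormal_mat n V"
  shows "V * V\<^sup>T = 1\<^sub>m n"
  using assms mat_mult_left_right_inverse[of "V\<^sup>T" n V] unfolding orthonormal_mat_def by auto

lemma orthonormal_mat_mult:
  assumes V: "orthonormal_mat n V" and W: "orthonormal_mat n W"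
  shows "orthonormal_mat n (V * W)"
proof -
  have Vc: "V \<in> carrier_mat n n" and Wc: "W \<in> carrier_mat n n"
    using V W unfolding orthonormal_mat_def by auto
  have "(V * W)\<^sup>T * (V * W) = W\<^sup>T * ((V\<^sup>T * V) * W)"
    using Vc Wc by (simp add: transpose_mult assoc_mult_mat[of _ n n _ n _ n])
  thus ?thesis
    using V W Vc Wc unfolding orthonormal_mat_def by simp
qed

lemma orthonormal_mat_conjugate_back:
  assumes W: "orthonormal_mat n W" and A: "A \<in> carrier_mat n n"
  shows "W * (W\<^sup>T * A * W) * W\<^sup>T = A"
proof -
  have Wc: "W \<in> carrier_mat n n" using W unfolding orthonormal_mat_def by auto
  have "W * (W\<^sup>T * A * W) * W\<^sup>T = (W * W\<^sup>T) * A * (W * W\<^sup>T)"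
    using Wc A by (simp add: assoc_mult_mat[of _ n n _ n _ n])
  thus ?thesis
    using orthonormal_mat_mult_transpose[OF W] A by simp
qed

lemma transpose_congruence_symmetric:
  fixes A B :: "'a :: comm_semiring_0 mat"
  assumes A: "A \<in> carrier_mat n n" and B: "B \<in> carrier_mat n k" and sym: "A\<^sup>T = A"
  shows "(B\<^sup>T * A * B)\<^sup>T = B\<^sup>T * A * B"
proof -
  have "(B\<^sup>T * A * B)\<^sup>T = B\<^sup>T * (B\<^sup>T * A)\<^sup>T"
    using transpose_mult[of "B\<^sup>T * A" k n B k] A B by simp
  also have "(B\<^sup>T * A)\<^sup>T = A * B"
    using A B by (simp add: transpose_mult[of _ k n _ n] sym)
  finally show ?thesis
    using A B by (simp add: assoc_mult_mat[of _ k n _ n _ k])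
qed

lemma mult_block_diag_mat:
  assumes "A1 \<in> carrier_mat n1 n1" "B1 \<in> carrier_mat n1 n1"
    and "A2 \<in> carrier_mat n2 n2" "B2 \<in> carrier_mat n2 n2"
  shows "four_block_mat A1 (0\<^sub>m n1 n2) (0\<^sub>m n2 n1) A2 * four_block_mat B1 (0\<^sub>m n1 n2) (0\<^sub>m n2 n1) B2
    = four_block_mat (A1 * B1) (0\<^sub>m n1 n2) (0\<^sub>m n2 n1) (A2 * B2)"
  using assms by (subst mult_four_block_mat[where ?nr1.0=n1 and ?n1.0=n1 and ?n2.0=n2 and ?nr2.0=n2
        and ?nc1.0=n1 and ?nc2.0=n2]) auto

lemma transpose_block_diag_mat:
  assumes "A1 \<in> carrier_mat n1 n1" "A2 \<in> carrier_mat n2 n2"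
  shows "(four_block_mat A1 (0\<^sub>m n1 n2) (0\<^sub>m n2 n1) A2)\<^sup>T
    = four_block_mat A1\<^sup>T (0\<^sub>m n1 n2) (0\<^sub>m n2 n1) A2\<^sup>T"
  using assms by (simp add: transpose_four_block_mat[of _ n1 n1 _ n2 _ n2])

lemma orthonormal_mat_block_diag:
  assumes "orthonormal_mat m V"
  shows "orthonormal_mat (Suc m) (four_block_mat (1\<^sub>m 1) (0\<^sub>m 1 m) (0\<^sub>m m 1) V)"
  using assms unfolding orthonormal_mat_def
  by (auto simp: transpose_block_diag_mat mult_block_diag_mat)

subsection \<open>The spectral theorem for real symmetric matrices\<close>

lemma conjugate_mult_mat_vec_of_real:
  fixes A :: "real mat" and v :: "complex vec"
  assumes "A \<in> carrier_mat n n" and "v \<in> carrier_vec n"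
  shows "conjugate (map_mat of_real A *\<^sub>v v) = map_mat of_real A *\<^sub>v conjugate v"
proof (rule eq_vecI)
  fix i assume "i < dim_vec (map_mat of_real A *\<^sub>v conjugate v)"
  with assms show "conjugate (map_mat of_real A *\<^sub>v v) $ i = (map_mat of_real A *\<^sub>v conjugate v) $ i"
    by (auto simp: scalar_prod_def cnj_sum)
qed (use assms in auto)

lemma symmetric_real_mat_has_eigenvalue:
  fixes A :: "real mat"
  assumes A: "A \<in> carrier_mat n n" and sym: "A\<^sup>T = A" and n: "0 < n"
  shows "\<exists>e. eigenvalue A e"
proof -
  let ?Ac = "map_mat complex_of_real A"
  have Ac: "?Ac \<in> carrier_mat n n" using A by simp
  have "degree (char_poly ?Ac) = n" using degree_monic_char_poly[OF Ac] by simp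
  then obtain z where z: "poly (char_poly ?Ac) z = 0"
    using fundamental_theorem_of_algebra n by (metis constant_degree neq0_conv)
  then obtain v where v: "v \<in> carrier_vec n" "v \<noteq> 0\<^sub>v n" and Av: "?Ac *\<^sub>v v = z \<cdot>\<^sub>v v"
    using eigenvalue_root_char_poly[OF Ac] Ac unfolding eigenvalue_def eigenvector_def by auto
  have "z * (v \<bullet>c v) = (?Ac *\<^sub>v v) \<bullet>c v"
    using v by (simp add: Av)
  also have "\<dots> = v \<bullet> (?Ac *\<^sub>v conjugate v)"
    using transpose_vec_mult_scalar[OF Ac, of "conjugate v" v] v sym
    by (simp add: map_mat_transpose)
  also have "\<dots> = cnj z * (v \<bullet>c v)"
    using v by (simp add: conjugate_mult_mat_vec_of_real[OF A, symmetric] Av conjugate_smult_vec)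
  finally have "cnj z = z"
    using v by simp
  hence "z = of_real (Re z)"
    by (metis Reals_cnj_iff complex_is_Real_iff of_real_Re)
  hence "of_real (poly (char_poly A) (Re z)) = (0 :: complex)"
    using z by (metis of_real_hom.char_poly_hom[OF A] of_real_hom.poly_map_poly)
  thus ?thesis
    using eigenvalue_root_char_poly[OF A] by auto
qed

lemma sprod_self_pos_iff:
  fixes v :: "real vec"
  assumes "v \<in> carrier_vec n"
  shows "0 < v \<bullet> v \<longleftrightarrow> v \<noteq> 0\<^sub>v n"
  using conjugate_square_greater_0_vec[OF assms] by simp

lemma orthonormal_completion:
  fixes v :: "real vec"
  assumes v: "v \<in> carrier_vec n" and v0: "v \<noteq> 0\<^sub>v n"
  shows "\<exists>W c. orthonormal_mat n W \<and> col W 0 = c \<cdot>\<^sub>v v"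
proof -
  interpret cof_vec_space n "TYPE(real)" .
  define b where "b = basis_completion v"
  from basis_completion[OF v v0, folded b_def]
  have b: "distinct b" "\<not> lin_dep (set b)" "set b \<subseteq> carrier_vec n" "hd b = v" "length b = n"
    by auto
  have n: "n \<noteq> 0" using v v0 by auto
  then obtain vs where bv: "b = v # vs" using b(4,5) by (cases b) auto
  define ws where "ws = gram_schmidt n b"
  from gram_schmidt_result[OF b(3,1,2) refl, folded ws_def]
  have ws: "set ws \<subseteq> carrier_vec n" "corthogonal ws" "length ws = n" by (auto simp: b(5))
  have ws0: "ws ! 0 = v"
    using gram_schmidt_hd[OF v, of vs] ws(3) n unfolding ws_def[symmetric] bv[symmetric]
    by (cases ws) auto
  have orth: "ws ! i \<bullet> ws ! j = 0 \<longleftrightarrow> i \<noteq> j" if "i < n" "j < n" for i j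
    using ws(2,3) that unfolding corthogonal_def by simp
  have pos: "0 < ws ! i \<bullet> ws ! i" if "i < n" for i
    using orth[OF that that] conjugate_square_ge_0_vec[of "ws ! i"] by simp
  define W where "W = mat_of_cols n (map (\<lambda>w. (1 / sqrt (w \<bullet> w)) \<cdot>\<^sub>v w) ws)"
  have W: "W \<in> carrier_mat n n" unfolding W_def using ws by auto
  have colW: "col W i = (1 / sqrt (ws ! i \<bullet> ws ! i)) \<cdot>\<^sub>v ws ! i" if "i < n" for i
    unfolding W_def using ws that by (subst col_mat_of_cols) auto
  have "W\<^sup>T * W = 1\<^sub>m n"
  proof (rule eq_matI)
    fix i j assume "i < dim_row (1\<^sub>m n)" "j < dim_col (1\<^sub>m n)"
    hence i: "i < n" and j: "j < n" by auto
    have wi: "ws ! i \<in> carrier_vec n" and wj: "ws ! j \<in> carrier_vec n" using ws i j by auto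
    have "(W\<^sup>T * W) $$ (i,j) = col W i \<bullet> col W j" using W i j by simp
    also have "\<dots> = (ws ! i \<bullet> ws ! j) / (sqrt (ws ! i \<bullet> ws ! i) * sqrt (ws ! j \<bullet> ws ! j))"
      unfolding colW[OF i] colW[OF j] using wi wj by simp
    also have "\<dots> = 1\<^sub>m n $$ (i,j)"
      using orth[OF i j] pos[OF i] i j by (cases "i = j") (auto simp: real_sqrt_mult[symmetric])
    finally show "(W\<^sup>T * W) $$ (i,j) = 1\<^sub>m n $$ (i,j)" .
  qed (use W in auto)
  moreover have "col W 0 = (1 / sqrt (v \<bullet> v)) \<cdot>\<^sub>v v"
    using colW[of 0] n ws0 by simp
  ultimately show ?thesis
    using W unfolding orthonormal_mat_def by blast
qed

lemma symmetric_mat_deflation: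
  fixes A :: "real mat"
  assumes A: "A \<in> carrier_mat (Suc m) (Suc m)" and sym: "A\<^sup>T = A"
  shows "\<exists>W e A'. orthonormal_mat (Suc m) W \<and> A' \<in> carrier_mat m m \<and> A'\<^sup>T = A' \<and>
    W\<^sup>T * A * W = four_block_mat (mat 1 1 (\<lambda>_. e)) (0\<^sub>m 1 m) (0\<^sub>m m 1) A'"
proof -
  obtain e where "eigenvalue A e"
    using symmetric_real_mat_has_eigenvalue[OF A sym] by auto
  then obtain v where v: "v \<in> carrier_vec (Suc m)" "v \<noteq> 0\<^sub>v (Suc m)" and Av: "A *\<^sub>v v = e \<cdot>\<^sub>v v"
    using A unfolding eigenvalue_def eigenvector_def by auto
  obtain W c where W: "orthonormal_mat (Suc m) W" and W0: "col W 0 = c \<cdot>\<^sub>v v"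
    using orthonormal_completion[OF v] by auto
  have Wc: "W \<in> carrier_mat (Suc m) (Suc m)" and WW: "W\<^sup>T * W = 1\<^sub>m (Suc m)"
    using W unfolding orthonormal_mat_def by auto
  have AW0: "A *\<^sub>v col W 0 = e \<cdot>\<^sub>v col W 0"
    unfolding W0 using A v Av by (simp add: mult_mat_vec smult_smult_assoc mult.commute)
  define B where "B = W\<^sup>T * A * W"
  have B: "B \<in> carrier_mat (Suc m) (Suc m)" unfolding B_def using Wc A by auto
  have symB: "B\<^sup>T = B"
    unfolding B_def by (rule transpose_congruence_symmetric[OF A Wc sym])
  have col0: "B $$ (i,0) = (if i = 0 then e else 0)" if i: "i < Suc m" for i
  proof -
    have "B $$ (i,0) = col W i \<bullet> (A *\<^sub>v col W 0)"
      unfolding B_def using Wc A i by (simp add: assoc_mult_mat[of _ "Suc m" "Suc m" _ "Suc m"] mult_mat_vec_def)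
    also have "\<dots> = e * (W\<^sup>T * W) $$ (i,0)"
      unfolding AW0 using Wc i by simp
    finally show ?thesis unfolding WW using i by simp
  qed
  have row0: "B $$ (0,j) = (if j = 0 then e else 0)" if j: "j < Suc m" for j
    using col0[OF j] arg_cong[OF symB, of "\<lambda>M. M $$ (j,0)"] B j by simp
  define A' where "A' = mat m m (\<lambda>(i,j). B $$ (Suc i, Suc j))"
  have "A'\<^sup>T = A'"
  proof (rule eq_matI)
    fix i j assume "i < dim_row A'" "j < dim_col A'"
    thus "A'\<^sup>T $$ (i,j) = A' $$ (i,j)"
      using arg_cong[OF symB, of "\<lambda>M. M $$ (Suc i, Suc j)"] B unfolding A'_def by simp
  qed (auto simp: A'_def)
  moreover have "B = four_block_mat (mat 1 1 (\<lambda>_. e)) (0\<^sub>m 1 m) (0\<^sub>m m 1) A'"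
  proof (rule eq_matI)
    fix i j assume "i < dim_row (four_block_mat (mat 1 1 (\<lambda>_. e)) (0\<^sub>m 1 m) (0\<^sub>m m 1) A')"
      "j < dim_col (four_block_mat (mat 1 1 (\<lambda>_. e)) (0\<^sub>m 1 m) (0\<^sub>m m 1) A')"
    hence i: "i < Suc m" and j: "j < Suc m" by (auto simp: A'_def)
    show "B $$ (i,j) = four_block_mat (mat 1 1 (\<lambda>_. e)) (0\<^sub>m 1 m) (0\<^sub>m m 1) A' $$ (i,j)"
      using row0[OF j] col0[OF i] i j by (cases i; cases j) (auto simp: A'_def)
  qed (use B in \<open>auto simp: A'_def\<close>)
  ultimately show ?thesis
    using W unfolding B_def by (intro exI[of _ W] exI[of _ e] exI[of _ A']) (auto simp: A'_def)
qed

definition orth_diagonalizes :: "nat \<Rightarrow> real mat \<Rightarrow> real mat \<Rightarrow> real mat \<Rightarrow> bool" where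
  "orth_diagonalizes n V D A \<longleftrightarrow>
     orthonormal_mat n V \<and> D \<in> carrier_mat n n \<and> diagonal_mat D \<and> A = V * D * V\<^sup>T"

theorem symmetric_mat_orth_diagonalizable:
  fixes A :: "real mat"
  assumes "A \<in> carrier_mat n n" and "A\<^sup>T = A"
  shows "\<exists>V D. orth_diagonalizes n V D A"
  using assms
proof (induction n arbitrary: A)
  case 0
  hence "orth_diagonalizes 0 (1\<^sub>m 0) (1\<^sub>m 0) A"
    unfolding orth_diagonalizes_def orthonormal_mat_def by (auto simp: diagonal_mat_def)
  thus ?case by blast
next
  case (Suc m A)
  obtain W e A' where W: "orthonormal_mat (Suc m) W" and A': "A' \<in> carrier_mat m m" "A'\<^sup>T = A'"
    and WAW: "W\<^sup>T * A * W = four_block_mat (mat 1 1 (\<lambda>_. e)) (0\<^sub>m 1 m) (0\<^sub>m m 1) A'"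
    using symmetric_mat_deflation[OF Suc.prems] by blast
  obtain V' D' where "orth_diagonalizes m V' D' A'"
    using Suc.IH[OF A'] by blast
  hence V': "orthonormal_mat m V'" and D': "D' \<in> carrier_mat m m" "diagonal_mat D'"
    and A'_eq: "A' = V' * D' * V'\<^sup>T"
    unfolding orth_diagonalizes_def by auto
  have V'c: "V' \<in> carrier_mat m m" using V' unfolding orthonormal_mat_def by auto
  define E where "E = four_block_mat (1\<^sub>m 1) (0\<^sub>m 1 m) (0\<^sub>m m 1) V'"
  define D where "D = four_block_mat (mat 1 1 (\<lambda>_. e)) (0\<^sub>m 1 m) (0\<^sub>m m 1) D'"
  have E: "orthonormal_mat (Suc m) E"
    unfolding E_def by (rule orthonormal_mat_block_diag[OF V'])
  have Dc: "D \<in> carrier_mat (Suc m) (Suc m)" and dD: "diagonal_mat D"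
    using D' unfolding D_def diagonal_mat_def by auto
  have "W\<^sup>T * A * W = E * D * E\<^sup>T"
    unfolding WAW E_def D_def A'_eq using V'c D'
    by (simp add: mult_block_diag_mat transpose_block_diag_mat)
  hence "A = W * (E * D * E\<^sup>T) * W\<^sup>T"
    using orthonormal_mat_conjugate_back[OF W Suc.prems(1)] by simp
  also have "\<dots> = (W * E) * D * (W * E)\<^sup>T"
    using W E Dc unfolding orthonormal_mat_def
    by (clarsimp simp add: transpose_mult[of _ "Suc m" "Suc m"] assoc_mult_mat[of _ "Suc m" "Suc m" _ "Suc m" _ "Suc m"])
  finally have "orth_diagonalizes (Suc m) (W * E) D A"
    unfolding orth_diagonalizes_def using orthonormal_mat_mult[OF W E] Dc dD by blast
  thus ?case by blast
qed

subsection \<open>Eigenvalues and quadratic forms of a diagonalised matrix\<close>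

lemma proots_prod_linear_factors: "proots (\<Prod>a\<leftarrow>es. [:-a, 1:]) = mset (es :: real list)"
proof (induction es)
  case (Cons a es)
  have "(\<Prod>x\<leftarrow>es. [:-x, 1:]) \<noteq> (0 :: real poly)"
    by (auto simp: prod_list_zero_iff)
  thus ?case
    using Cons.IH by (simp add: proots_mult del: mult_pCons_left)
qed simp

lemma eigs_orth_diagonalizes:
  assumes "orth_diagonalizes n V D A"
  shows "eigs A = sort (diag_mat D)"
proof -
  have V: "V \<in> carrier_mat n n" and D: "D \<in> carrier_mat n n" "diagonal_mat D"
    and A: "A = V * D * V\<^sup>T"
    using assms unfolding orth_diagonalizes_def orthonormal_mat_def by auto
  have "similar_mat_wit A D V V\<^sup>T"
    using V D A orthonormal_mat_mult_transpose[of n V] assms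
    unfolding similar_mat_wit_def orth_diagonalizes_def orthonormal_mat_def by auto
  hence "char_poly A = char_poly D"
    using char_poly_similar unfolding similar_mat_def by blast
  also have "\<dots> = (\<Prod>a\<leftarrow>diag_mat D. [:-a, 1:])"
    using D by (intro char_poly_upper_triangular) (auto simp: diagonal_mat_def upper_triangular_def)
  finally show ?thesis
    unfolding eigs_def by (simp add: proots_prod_linear_factors)
qed

lemma length_eigs_symmetric:
  assumes "A \<in> carrier_mat n n" and "A\<^sup>T = A"
  shows "length (eigs A) = n"
  using symmetric_mat_orth_diagonalizable[OF assms] eigs_orth_diagonalizes
  unfolding orth_diagonalizes_def by (force simp: diag_mat_def)

lemma sprod_self_eq_sum_squares:
  fixes c :: "real vec"
  assumes "c \<in> carrier_vec n"
  shows "c \<bullet> c = (\<Sum>j<n. (c $ j)\<^sup>2)"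
  using assms by (simp add: scalar_prod_def lessThan_atLeast0 power2_eq_square)

lemma diagonal_quadratic_form:
  fixes D :: "real mat"
  assumes D: "D \<in> carrier_mat n n" "diagonal_mat D" and c: "c \<in> carrier_vec n"
  shows "c \<bullet> (D *\<^sub>v c) = (\<Sum>j<n. D $$ (j,j) * (c $ j)\<^sup>2)"
proof -
  have "(D *\<^sub>v c) $ j = D $$ (j,j) * c $ j" if j: "j < n" for j
  proof -
    have "(D *\<^sub>v c) $ j = (\<Sum>k\<in>{0..<n}. D $$ (j,k) * c $ k)"
      using D c j by (simp add: scalar_prod_def)
    also have "\<dots> = (\<Sum>k\<in>{0..<n}. if k = j then D $$ (j,j) * c $ j else 0)"
      using D j by (intro sum.cong) (auto simp: diagonal_mat_def)
    finally show ?thesis using j by simp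
  qed
  thus ?thesis
    using D c by (simp add: scalar_prod_def lessThan_atLeast0 power2_eq_square mult_ac)
qed

lemma orthonormal_mat_transpose_sprod:
  fixes x y :: "real vec"
  assumes V: "orthonormal_mat n V" and x: "x \<in> carrier_vec n" and y: "y \<in> carrier_vec n"
  shows "(V\<^sup>T *\<^sub>v x) \<bullet> (V\<^sup>T *\<^sub>v y) = x \<bullet> y"
proof -
  have Vc: "V \<in> carrier_mat n n" using V unfolding orthonormal_mat_def by auto
  have "(V\<^sup>T *\<^sub>v x) \<bullet> (V\<^sup>T *\<^sub>v y) = x \<bullet> ((V * V\<^sup>T) *\<^sub>v y)"
    using Vc x y transpose_vec_mult_scalar[of V n n "V\<^sup>T *\<^sub>v y" x]
    by (simp add: assoc_mult_mat_vec[of _ n n _ n])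
  thus ?thesis
    using orthonormal_mat_mult_transpose[OF V] y by simp
qed

lemma orth_diagonalizes_quadratic_form:
  fixes y :: "real vec"
  assumes "orth_diagonalizes n V D A" and y: "y \<in> carrier_vec n"
  shows "y \<bullet> (A *\<^sub>v y) = (V\<^sup>T *\<^sub>v y) \<bullet> (D *\<^sub>v (V\<^sup>T *\<^sub>v y))"
proof -
  have V: "V \<in> carrier_mat n n" and D: "D \<in> carrier_mat n n" and A: "A = V * D * V\<^sup>T"
    using assms unfolding orth_diagonalizes_def orthonormal_mat_def by auto
  have "A *\<^sub>v y = V *\<^sub>v (D *\<^sub>v (V\<^sup>T *\<^sub>v y))"
    unfolding A using V D y by (simp add: assoc_mult_mat_vec[of _ n n _ n])
  thus ?thesis
    using transpose_vec_mult_scalar[of V n n "D *\<^sub>v (V\<^sup>T *\<^sub>v y)" y] V D y by simp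
qed

lemma orth_diagonalizes_quadratic_form_le:
  fixes y :: "real vec"
  assumes A: "orth_diagonalizes n V D A" and y: "y \<in> carrier_vec n"
    and vanish: "\<And>j. j < n \<Longrightarrow> t < D $$ (j,j) \<Longrightarrow> (V\<^sup>T *\<^sub>v y) $ j = 0"
  shows "y \<bullet> (A *\<^sub>v y) \<le> t * (y \<bullet> y)"
proof -
  have V: "orthonormal_mat n V" and D: "D \<in> carrier_mat n n" "diagonal_mat D"
    using A unfolding orth_diagonalizes_def by auto
  define c where "c = V\<^sup>T *\<^sub>v y"
  have c: "c \<in> carrier_vec n" using V y unfolding c_def orthonormal_mat_def by auto
  have "y \<bullet> (A *\<^sub>v y) = (\<Sum>j<n. D $$ (j,j) * (c $ j)\<^sup>2)"
    using orth_diagonalizes_quadratic_form[OF A y] diagonal_quadratic_form[OF D c]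
    unfolding c_def by simp
  also have "\<dots> \<le> (\<Sum>j<n. t * (c $ j)\<^sup>2)"
  proof (rule sum_mono)
    fix j assume "j \<in> {..<n}"
    thus "D $$ (j,j) * (c $ j)\<^sup>2 \<le> t * (c $ j)\<^sup>2"
      using vanish[of j] unfolding c_def[symmetric]
      by (cases "t < D $$ (j,j)") (auto intro: mult_right_mono)
  qed
  also have "\<dots> = t * (y \<bullet> y)"
    using orthonormal_mat_transpose_sprod[OF V y y] sprod_self_eq_sum_squares[OF c]
    unfolding c_def by (simp add: sum_distrib_left[symmetric])
  finally show ?thesis .
qed

lemma orth_diagonalizes_quadratic_form_gt:
  fixes w :: "real vec"
  assumes B: "orth_diagonalizes n U F B" and w: "w \<in> carrier_vec n" "w \<noteq> 0\<^sub>v n"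
    and vanish: "\<And>i. i < n \<Longrightarrow> F $$ (i,i) \<le> t \<Longrightarrow> (U\<^sup>T *\<^sub>v w) $ i = 0"
  shows "t * (w \<bullet> w) < w \<bullet> (B *\<^sub>v w)"
proof -
  have U: "orthonormal_mat n U" and F: "F \<in> carrier_mat n n" "diagonal_mat F"
    using B unfolding orth_diagonalizes_def by auto
  define c where "c = U\<^sup>T *\<^sub>v w"
  have c: "c \<in> carrier_vec n" using U w unfolding c_def orthonormal_mat_def by auto
  have cc: "c \<bullet> c = w \<bullet> w"
    using orthonormal_mat_transpose_sprod[OF U w(1) w(1)] unfolding c_def .
  hence "c \<noteq> 0\<^sub>v n"
    using sprod_self_pos_iff[OF w(1)] w(2) by auto
  then obtain i0 where i0: "i0 < n" "c $ i0 \<noteq> 0"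
    using c by (metis eq_vecI carrier_vecD index_zero_vec)
  have "t * (w \<bullet> w) = (\<Sum>i<n. t * (c $ i)\<^sup>2)"
    using sprod_self_eq_sum_squares[OF c] cc by (simp add: sum_distrib_left)
  also have "\<dots> < (\<Sum>i<n. F $$ (i,i) * (c $ i)\<^sup>2)"
  proof (rule sum_strict_mono_ex1)
    show "\<forall>i\<in>{..<n}. t * (c $ i)\<^sup>2 \<le> F $$ (i,i) * (c $ i)\<^sup>2"
    proof
      fix i assume "i \<in> {..<n}"
      thus "t * (c $ i)\<^sup>2 \<le> F $$ (i,i) * (c $ i)\<^sup>2"
        using vanish[of i] unfolding c_def[symmetric]
        by (cases "F $$ (i,i) \<le> t") (auto intro: mult_right_mono)
    qed
    have "t < F $$ (i0,i0)"
      using i0 vanish[of i0] unfolding c_def[symmetric] by fastforce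
    thus "\<exists>i\<in>{..<n}. t * (c $ i)\<^sup>2 < F $$ (i,i) * (c $ i)\<^sup>2"
      using i0 by (intro bexI[of _ i0]) (auto intro: mult_strict_right_mono)
  qed simp
  also have "\<dots> = w \<bullet> (B *\<^sub>v w)"
    using orth_diagonalizes_quadratic_form[OF B w(1)] diagonal_quadratic_form[OF F c]
    unfolding c_def by simp
  finally show ?thesis .
qed

subsection \<open>Eigenvalue counts of a compression\<close>

lemma orth_proj_sprod_le:
  fixes w :: "real vec"
  assumes P: "orth_proj_mat n P" and w: "w \<in> carrier_vec n"
  shows "(P *\<^sub>v w) \<bullet> (P *\<^sub>v w) \<le> w \<bullet> w"
proof -
  have Pc: "P \<in> carrier_mat n n" and PP: "P * P = P" and Pt: "P\<^sup>T = P"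
    using P unfolding orth_proj_mat_def by auto
  define y where "y = P *\<^sub>v w"
  have y: "y \<in> carrier_vec n" unfolding y_def using Pc w by simp
  have yy: "y \<bullet> y = w \<bullet> y"
    using transpose_vec_mult_scalar[OF Pc y w] Pc w Pt PP
    by (simp add: y_def assoc_mult_mat_vec[of _ n n _ n, symmetric])
  have "0 \<le> (w - y) \<bullet> (w - y)"
    using conjugate_square_ge_0_vec[of "w - y"] by simp
  also have "\<dots> = w \<bullet> w - y \<bullet> y"
    using w y yy by (simp add: minus_scalar_prod_distrib scalar_prod_minus_distrib comm_scalar_prod[of y n w])
  finally show ?thesis unfolding y_def by simp
qed

lemma orth_proj_quadratic_form:
  fixes w :: "real vec"
  assumes P: "orth_proj_mat n P" and A: "A \<in> carrier_mat n n" and w: "w \<in> carrier_vec n"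
  shows "w \<bullet> ((P * A * P) *\<^sub>v w) = (P *\<^sub>v w) \<bullet> (A *\<^sub>v (P *\<^sub>v w))"
proof -
  have Pc: "P \<in> carrier_mat n n" and Pt: "P\<^sup>T = P"
    using P unfolding orth_proj_mat_def by auto
  have "(P * A * P) *\<^sub>v w = P *\<^sub>v (A *\<^sub>v (P *\<^sub>v w))"
    using Pc A w by (simp add: assoc_mult_mat_vec[of _ n n _ n])
  thus ?thesis
    using transpose_vec_mult_scalar[OF Pc _ w, of "A *\<^sub>v (P *\<^sub>v w)"] Pc A w Pt by simp
qed

lemma exists_nonzero_solution_fewer_equations:
  fixes rs :: "'a :: idom vec list"
  assumes rs: "set rs \<subseteq> carrier_vec n" and len: "length rs < n"
  shows "\<exists>c. c \<in> carrier_vec n \<and> c \<noteq> 0\<^sub>v n \<and> (\<forall>r \<in> set rs. r \<bullet> c = 0)"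
proof -
  define M where "M = mat\<^sub>r n n (\<lambda>i. if i < length rs then rs ! i else 0\<^sub>v n)"
  have M: "M \<in> carrier_mat n n" unfolding M_def by simp
  have "M = mat\<^sub>r n n (\<lambda>i. if i = length rs then 0\<^sub>v n else if i < length rs then rs ! i else 0\<^sub>v n)"
    unfolding M_def by (intro arg_cong[where f = "mat\<^sub>r n n"]) auto
  moreover have "(\<lambda>i. if i < length rs then rs ! i else 0\<^sub>v n) \<in> {0..<n} \<rightarrow> carrier_vec n"
    using rs nth_mem by fastforce
  ultimately have "det M = 0"
    using det_row_0[OF len] by metis
  then obtain c where c: "c \<in> carrier_vec n" "c \<noteq> 0\<^sub>v n" and Mc: "M *\<^sub>v c = 0\<^sub>v n"
    using det_0_iff_vec_prod_zero[OF M] by auto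
  have "rs ! i \<bullet> c = 0" if i: "i < length rs" for i
  proof -
    have "rs ! i \<in> carrier_vec n"
      using rs nth_mem[OF i] by blast
    hence "row M i = rs ! i"
      unfolding M_def using i len by (subst row_mat_of_row_fun) auto
    thus ?thesis
      using arg_cong[OF Mc, of "\<lambda>v. v $ i"] M i len by simp
  qed
  thus ?thesis
    using c by (metis in_set_conv_nth)
qed

lemma exists_vec_supported_annihilated:
  fixes G :: "'a :: idom mat"
  assumes G: "G \<in> carrier_mat m n" and I: "I \<subseteq> {..<n}" and J: "J \<subseteq> {..<m}"
    and card: "card J < card I"
  shows "\<exists>c. c \<in> carrier_vec n \<and> c \<noteq> 0\<^sub>v n \<and> (\<forall>i<n. i \<notin> I \<longrightarrow> c $ i = 0) \<and>
    (\<forall>j\<in>J. (G *\<^sub>v c) $ j = 0)"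
proof -
  define rs where
    "rs = map (unit_vec n) (filter (\<lambda>i. i \<notin> I) [0..<n]) @ map (row G) (sorted_list_of_set J)"
  have fin: "finite I" "finite J"
    using I J finite_subset by auto
  have "length (filter (\<lambda>i. i \<notin> I) [0..<n]) = card ({..<n} - I)"
    unfolding length_filter_conv_card by (intro arg_cong[where f = card]) auto
  also have "\<dots> = n - card I"
    using I fin by (simp add: card_Diff_subset)
  finally have "length rs < n"
    using card card_mono[OF _ I] unfolding rs_def by simp
  moreover have "set rs \<subseteq> carrier_vec n"
    using G unfolding rs_def by auto
  ultimately obtain c where c: "c \<in> carrier_vec n" "c \<noteq> 0\<^sub>v n" and rc: "\<forall>r \<in> set rs. r \<bullet> c = 0"
    using exists_nonzero_solution_fewer_equations by blast
  have "c $ i = 0" if "i < n" "i \<notin> I" for i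
    using rc scalar_prod_left_unit[OF c(1) that(1)] that unfolding rs_def by auto
  moreover have "(G *\<^sub>v c) $ j = 0" if "j \<in> J" for j
    using rc G J that fin unfolding rs_def by auto
  ultimately show ?thesis
    using c by blast
qed

lemma card_diag_gt_compression_le:
  fixes A P :: "real mat"
  assumes A: "orth_diagonalizes n V D A" and B: "orth_diagonalizes n U F (P * A * P)"
    and P: "orth_proj_mat n P" and t: "0 \<le> t"
  shows "card {i. i < n \<and> t < F $$ (i,i)} \<le> card {j. j < n \<and> t < D $$ (j,j)}"
proof (rule ccontr)
  define I where "I = {i. i < n \<and> t < F $$ (i,i)}"
  define J where "J = {j. j < n \<and> t < D $$ (j,j)}"
  assume "\<not> ?thesis"
  hence "card J < card I" unfolding I_def J_def by simp
  moreover have Uc: "U \<in> carrier_mat n n" and UU: "U\<^sup>T * U = 1\<^sub>m n" and Vc: "V \<in> carrier_mat n n"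
    and Ac: "A \<in> carrier_mat n n" and Pc: "P \<in> carrier_mat n n"
    using A B P unfolding orth_diagonalizes_def orthonormal_mat_def orth_proj_mat_def by auto
  ultimately obtain c where c: "c \<in> carrier_vec n" "c \<noteq> 0\<^sub>v n"
    and supp: "\<forall>i<n. i \<notin> I \<longrightarrow> c $ i = 0" and ann: "\<forall>j \<in> J. (V\<^sup>T * P * U *\<^sub>v c) $ j = 0"
    using exists_vec_supported_annihilated[of "V\<^sup>T * P * U" n n I J]
    unfolding I_def J_def by auto
  define w where "w = U *\<^sub>v c"
  define y where "y = P *\<^sub>v w"
  have w: "w \<in> carrier_vec n" and y: "y \<in> carrier_vec n"
    unfolding w_def y_def using Uc Pc c by auto
  have Utw: "U\<^sup>T *\<^sub>v w = c"
    unfolding w_def using Uc UU c by (simp add: assoc_mult_mat_vec[of _ n n _ n, symmetric])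
  hence "w \<noteq> 0\<^sub>v n"
    using c Uc by auto
  have Vty: "V\<^sup>T *\<^sub>v y = (V\<^sup>T * P * U) *\<^sub>v c"
    unfolding y_def w_def using Vc Pc Uc c by (simp add: assoc_mult_mat_vec[of _ n n _ n])
  have "t * (w \<bullet> w) < w \<bullet> ((P * A * P) *\<^sub>v w)"
    using orth_diagonalizes_quadratic_form_gt[OF B w \<open>w \<noteq> 0\<^sub>v n\<close>] supp
    unfolding Utw I_def by auto
  also have "\<dots> = y \<bullet> (A *\<^sub>v y)"
    unfolding y_def by (rule orth_proj_quadratic_form[OF P Ac w])
  also have "\<dots> \<le> t * (y \<bullet> y)"
    using orth_diagonalizes_quadratic_form_le[OF A y] ann unfolding Vty J_def by auto
  also have "\<dots> \<le> t * (w \<bullet> w)"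
    unfolding y_def using orth_proj_sprod_le[OF P w] t by (rule mult_left_mono)
  finally show False by simp
qed

subsection \<open>Eigenvalues of a compression\<close>

lemma sorted_nth_le_if_count_gt_le:
  fixes xs ys :: "'a :: linorder list"
  assumes len: "length xs = length ys" and sx: "sorted xs" and sy: "sorted ys"
    and count: "\<And>t. t \<in> set ys \<Longrightarrow> length (filter (\<lambda>x. t < x) xs) \<le> length (filter (\<lambda>y. t < y) ys)"
    and k: "k < length ys"
  shows "xs ! k \<le> ys ! k"
proof (rule ccontr)
  define n where "n = length ys"
  define t where "t = ys ! k"
  assume "\<not> xs ! k \<le> ys ! k"
  hence gt: "t < xs ! k" unfolding t_def by simp
  have "{k..<n} \<subseteq> {i. i < length xs \<and> t < xs ! i}"
  proof
    fix i assume "i \<in> {k..<n}"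
    hence "k \<le> i" "i < length xs" using len unfolding n_def by auto
    thus "i \<in> {i. i < length xs \<and> t < xs ! i}"
      using gt sorted_nth_mono[OF sx] by (auto intro: order.strict_trans2)
  qed
  hence "card {k..<n} \<le> length (filter (\<lambda>x. t < x) xs)"
    unfolding length_filter_conv_card by (rule card_mono[rotated]) simp
  moreover have "{i. i < length ys \<and> t < ys ! i} \<subseteq> {Suc k..<n}"
  proof
    fix i assume i: "i \<in> {i. i < length ys \<and> t < ys ! i}"
    have "\<not> i \<le> k"
      using i sorted_nth_mono[OF sy, of i k] k unfolding t_def by auto
    thus "i \<in> {Suc k..<n}" using i unfolding n_def by auto
  qed
  hence "length (filter (\<lambda>y. t < y) ys) \<le> card {Suc k..<n}"
    unfolding length_filter_conv_card by (rule card_mono[rotated]) simp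
  ultimately show False
    using count[of t] k unfolding t_def n_def by simp
qed

lemma length_filter_eigs:
  assumes "orth_diagonalizes n V D A"
  shows "length (filter p (eigs A)) = card {i. i < n \<and> p (D $$ (i,i))}"
proof -
  have D: "D \<in> carrier_mat n n" using assms unfolding orth_diagonalizes_def by auto
  show ?thesis
    unfolding eigs_orth_diagonalizes[OF assms] filter_sort length_sort length_filter_conv_card
    using D by (intro arg_cong[where f = card]) (auto simp: diag_mat_def)
qed

lemma psd_orth_diagonalizes_diag_nonneg:
  assumes A: "orth_diagonalizes n V D A" and psd: "psd_mat n A" and j: "j < n"
  shows "0 \<le> D $$ (j,j)"
proof -
  have V: "orthonormal_mat n V" and D: "D \<in> carrier_mat n n" "diagonal_mat D"
    using A unfolding orth_diagonalizes_def by auto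
  have Vc: "V \<in> carrier_mat n n" using V unfolding orthonormal_mat_def by auto
  define y where "y = V *\<^sub>v unit_vec n j"
  have y: "y \<in> carrier_vec n" unfolding y_def using Vc by simp
  have "V\<^sup>T *\<^sub>v y = unit_vec n j"
    unfolding y_def using V Vc unfolding orthonormal_mat_def
    by (simp add: assoc_mult_mat_vec[of _ n n _ n, symmetric])
  hence "y \<bullet> (A *\<^sub>v y) = D $$ (j,j)"
    using orth_diagonalizes_quadratic_form[OF A y] D j by simp
  thus ?thesis
    using psd y unfolding psd_mat_def by metis
qed

lemma eigs_compression_le:
  assumes psd: "psd_mat n A" and P: "orth_proj_mat n P" and k: "k < n"
  shows "eigs (P * A * P) ! k \<le> eigs A ! k"
proof -
  have Ac: "A \<in> carrier_mat n n" and symA: "A\<^sup>T = A" and Pc: "P \<in> carrier_mat n n" and Pt: "P\<^sup>T = P"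
    using psd P unfolding psd_mat_def symmetric_mat_def orth_proj_mat_def by auto
  have "(P * A * P)\<^sup>T = P * A * P"
    using transpose_congruence_symmetric[OF Ac Pc symA] unfolding Pt .
  moreover have "P * A * P \<in> carrier_mat n n" using Ac Pc by simp
  ultimately obtain U F where B: "orth_diagonalizes n U F (P * A * P)"
    and lenB: "length (eigs (P * A * P)) = n"
    using symmetric_mat_orth_diagonalizable length_eigs_symmetric by metis
  obtain V D where A: "orth_diagonalizes n V D A"
    using symmetric_mat_orth_diagonalizable[OF Ac symA] by blast
  have lenA: "length (eigs A) = n"
    by (rule length_eigs_symmetric[OF Ac symA])
  show ?thesis
  proof (rule sorted_nth_le_if_count_gt_le)
    fix t assume "t \<in> set (eigs A)"
    hence "0 \<le> t"
      using psd_orth_diagonalizes_diag_nonneg[OF A psd] A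
      unfolding eigs_orth_diagonalizes[OF A] orth_diagonalizes_def by (auto simp: diag_mat_def)
    thus "length (filter (\<lambda>x. t < x) (eigs (P * A * P))) \<le> length (filter (\<lambda>y. t < y) (eigs A))"
      unfolding length_filter_eigs[OF A] length_filter_eigs[OF B]
      by (rule card_diag_gt_compression_le[OF A B P])
  qed (use lenA lenB k in \<open>simp_all add: eigs_def\<close>)
qed

theorem corollary3p7:
  fixes A P :: "real mat" and n T :: nat and u :: real
  assumes "psd_mat n A"
    and "orth_proj_mat n P"
    and "1 \<le> T" and "T \<le> n"
    and "u > lambda_max A"
  shows "(\<Sum>i = n - T + 1..n. 1 / (u - eig (P * A * P) i))
           \<le> (\<Sum>i = n - T + 1..n. 1 / (u - eig A i))"
proof (rule sum_mono)
  fix i assume "i \<in> {n - T + 1..n}"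
  hence i: "1 \<le> i" "i \<le> n" by auto
  have A: "A \<in> carrier_mat n n" "A\<^sup>T = A"
    using assms(1) unfolding psd_mat_def symmetric_mat_def by auto
  have "eig (P * A * P) i \<le> eig A i"
    unfolding eig_def using eigs_compression_le[OF assms(1,2), of "i - 1"] i by simp
  moreover have "eig A i \<le> lambda_max A"
    unfolding lambda_max_def eig_def using A length_eigs_symmetric[OF A] i
    by (intro sorted_nth_mono) (auto simp: eigs_def)
  ultimately show "1 / (u - eig (P * A * P) i) \<le> 1 / (u - eig A i)"
    using assms(5) by (intro divide_left_mono) auto
qed

end
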